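(* Let $\sigma > -2$ and $p < -1-\sigma$, and set $a = \frac{\sigma+2}{1-p} \in (0,1)$, $c_a = \big(a(1-a)\big)^{1/(p-1)}$, $u_a(x) = c_a x^a$. Then there is no positive solution $u \in C^2(0,+\infty)$ of \[ u''(x) + x^\sigma u(x)^p = 0 \quad \text{for all } x>0 \] satisfying $u(x) < u_a(x)$ for all $x>0$. In particular, for every $\alpha<0$, the local solution $u^\alpha := u_a(1+w)$ cannot be extended to a positive solution on all of $(0,+\infty)$, where $w$ is the local solution near $x=0$ of \[ x(xw')' + (2a-1)x w' + a(1-a)(p-1) w + a(1-a)\big[(1+w)^p - 1 - p w\big] = 0 \] with $\lim_{x\searrow0} w(x)/x^{\mu_+} = \alpha$, and $\mu_+>0$ is the positive root of $\mu^2 + (2a-1)\mu + a(1-a)(p-1) = 0$.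
   Context: Note $c_a^{p-1} = a(1-a)$, and $u_a$ is a positive solution of the equation. For $u = u_a(1+w)$, the equation for $u$ on $(0,T)$ is equivalent to the stated equation for $w$; a unique local solution $w\in C[0,T]\cap C^2(0,T)$ with the prescribed asymptotics $\lim_{x\searrow 0}w(x)/x^{\mu_+}=\alpha$ exists for some $T>0$. *)

theory Defs
  imports "HOL-Analysis.Analysis"
begin

definition is_C2_on :: "real set \<Rightarrow> (real \<Rightarrow> real) \<Rightarrow> (real \<Rightarrow> real) \<Rightarrow> (real \<Rightarrow> real) \<Rightarrow> bool" where
  "is_C2_on S u u' u'' \<longleftrightarrow>
     (\<forall>x\<in>S. (u has_real_derivative u' x) (at x) \<and> (u' has_real_derivative u'' x) (at x))
     \<and> continuous_on S u''"

definition pos_solution_on :: "real \<Rightarrow> real \<Rightarrow> real set \<Rightarrow> (real \<Rightarrow> real) \<Rightarrow> bool" where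
  "pos_solution_on \<sigma> p S u \<longleftrightarrow>
     (\<exists>u' u''. is_C2_on S u u' u'' \<and>
        (\<forall>x\<in>S. u x > 0 \<and> u'' x + x powr \<sigma> * (u x) powr p = 0))"

end

theory Submission
  imports Defs
begin

(* With x = e^t and u(x) = e^(a t) V(t) (Emden-Fowler), the equation becomes the autonomous
   equation (e^(b t) V')' = - e^(b t) (V^p - c_a^(p-1) V) with b = 2a - 1; the singular solution
   u_a is the equilibrium V = c_a, and the source V^p - c_a^(p-1) V is positive on (0, c_a).
   A solution below u_a gives 0 < V < c_a on the whole line.  Reversing time if necessary, b >= 0,
   so the flux e^(b t) V' decreases; a positive value of it would drive V to 0 in finite backward
   time.  Hence V decreases and stays below V(0) < c_a, and the source then pushes V (or V^(1-p)
   when p > 0) down at a uniform rate, so it reaches 0 in finite forward time.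
   For u^alpha with alpha < 0, V = c_a (1 + w(e^t)) lies below c_a near -infinity and tends to c_a
   there.  Before a first time where V reached c_a the flux could not become negative (V would then
   drop), so V would be nondecreasing there, hence at least c_a: thus V < c_a everywhere. *)

lemma not_pos_forever_if_deriv_le_neg:
  fixes V V' :: "real \<Rightarrow> real"
  assumes deriv: "\<And>t. t \<ge> t0 \<Longrightarrow> (V has_real_derivative V' t) (at t)"
    and decay: "\<And>t. t \<ge> t0 \<Longrightarrow> V' t \<le> - \<delta>" and "\<delta> > 0"
    and pos: "\<And>t. t \<ge> t0 \<Longrightarrow> V t > 0"
  shows False
proof -
  define t where "t = t0 + V t0 / \<delta> + 1"
  have "t0 < t" using pos[of t0] \<open>\<delta> > 0\<close> unfolding t_def by (simp add: field_simps)
  then obtain z where z: "t0 < z" "z < t" "V t - V t0 = (t - t0) * V' z"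
    using MVT2[of t0 t V V'] deriv by force
  have "(t - t0) * V' z \<le> (t - t0) * (- \<delta>)"
    using decay[of z] z by (intro mult_left_mono) auto
  moreover have "(t - t0) * \<delta> = V t0 + \<delta>" unfolding t_def using \<open>\<delta> > 0\<close> by (simp add: field_simps)
  ultimately have "V t \<le> - \<delta>" using z by linarith
  with pos[of t] \<open>t0 < t\<close> \<open>\<delta> > 0\<close> show False by linarith
qed

lemma not_pos_backward_if_deriv_ge_pos:
  fixes V V' :: "real \<Rightarrow> real"
  assumes deriv: "\<And>t. t \<le> t0 \<Longrightarrow> (V has_real_derivative V' t) (at t)"
    and growth: "\<And>t. t \<le> t0 \<Longrightarrow> V' t \<ge> \<delta>" and "\<delta> > 0"
    and pos: "\<And>t. t \<le> t0 \<Longrightarrow> V t > 0"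
  shows False
proof -
  define t where "t = t0 - V t0 / \<delta> - 1"
  have "t < t0" using pos[of t0] \<open>\<delta> > 0\<close> unfolding t_def by (simp add: field_simps)
  then obtain z where z: "t < z" "z < t0" "V t0 - V t = (t0 - t) * V' z"
    using MVT2[of t t0 V V'] deriv by force
  have "(t0 - t) * V' z \<ge> (t0 - t) * \<delta>"
    using growth[of z] z by (intro mult_left_mono) auto
  moreover have "(t0 - t) * \<delta> = V t0 + \<delta>" unfolding t_def using \<open>\<delta> > 0\<close> by (simp add: field_simps)
  ultimately have "V t \<le> - \<delta>" using z by linarith
  with pos[of t] \<open>t < t0\<close> \<open>\<delta> > 0\<close> show False by linarith
qed

locale fowler_autonomous_ode =
  fixes V V' :: "real \<Rightarrow> real" and b p c :: real
  assumes V_deriv: "\<And>t. (V has_real_derivative V' t) (at t)"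
    and flux_deriv: "\<And>t. ((\<lambda>t. exp (b * t) * V' t) has_real_derivative
           - (exp (b * t) * (V t powr p - c powr (p - 1) * V t))) (at t)"
    and V_pos: "\<And>t. 0 < V t"
    and c_pos: "0 < c"
    and p_less_1: "p < 1"
begin

definition source :: "real \<Rightarrow> real" where
  "source v = v powr p - c powr (p - 1) * v"

definition flux :: "real \<Rightarrow> real" where
  "flux t = exp (b * t) * V' t"

lemma flux_has_deriv: "(flux has_real_derivative - (exp (b * t) * source (V t))) (at t)"
  using flux_deriv unfolding flux_def[abs_def] source_def .

lemma V'_eq_flux: "V' t = exp (- b * t) * flux t"
  unfolding flux_def by (simp add: exp_minus field_simps)

lemma source_pos:
  assumes "0 < v" "v < c"
  shows "0 < source v"
proof -
  have "c powr (p - 1) < v powr (p - 1)"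
    using assms p_less_1 powr_less_mono2_neg[of "p - 1" v c] by simp
  then have "c powr (p - 1) * v < v powr (p - 1) * v" using assms by simp
  also have "\<dots> = v powr p" using assms powr_add[of v "p - 1" 1] by simp
  finally show ?thesis unfolding source_def by simp
qed

lemma flux_antimono:
  assumes "s \<le> t" and below: "\<And>r. s \<le> r \<Longrightarrow> r \<le> t \<Longrightarrow> V r < c"
  shows "flux t \<le> flux s"
  using DERIV_nonpos_imp_nonincreasing[OF \<open>s \<le> t\<close>, of flux] flux_has_deriv
    source_pos[OF V_pos below] by (force intro: mult_nonneg_nonneg less_imp_le)

lemma V_antimono:
  assumes flux_nonpos: "\<And>t. flux t \<le> 0" and "s \<le> t"
  shows "V t \<le> V s"
proof -
  have "V' r \<le> 0" for r using V'_eq_flux[of r] flux_nonpos[of r] by (simp add: mult_nonneg_nonpos)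
  then show ?thesis using DERIV_nonpos_imp_nonincreasing[OF \<open>s \<le> t\<close>, of V] V_deriv by blast
qed

lemma V'_le_of_source_bound:
  assumes "0 \<le> b" "flux (t - 1) \<le> 0" "0 \<le> m"
    and bound: "\<And>r. t - 1 \<le> r \<Longrightarrow> r \<le> t \<Longrightarrow> m \<le> source (V r)"
  shows "V' t \<le> - m * exp (- b)"
proof -
  define \<phi> where "\<phi> r = flux r + m * exp (b * (t - 1)) * r" for r
  have "\<phi> t \<le> \<phi> (t - 1)"
  proof (rule DERIV_nonpos_imp_nonincreasing[of "t - 1" t \<phi>])
    fix r assume r: "t - 1 \<le> r" "r \<le> t"
    have "m * exp (b * (t - 1)) \<le> m * exp (b * r)"
      using r \<open>0 \<le> b\<close> \<open>0 \<le> m\<close> by (simp add: mult_left_mono)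
    also have "\<dots> \<le> exp (b * r) * source (V r)" using bound[OF r] by (simp add: mult.commute)
    finally have "- (exp (b * r) * source (V r)) + m * exp (b * (t - 1)) \<le> 0" by simp
    moreover have "(\<phi> has_real_derivative - (exp (b * r) * source (V r)) + m * exp (b * (t - 1))) (at r)"
      unfolding \<phi>_def by (auto intro!: derivative_eq_intros flux_has_deriv)
    ultimately show "\<exists>y. (\<phi> has_real_derivative y) (at r) \<and> y \<le> 0" by blast
  qed simp
  then have "flux t \<le> - m * exp (b * (t - 1))"
    using \<open>flux (t - 1) \<le> 0\<close> unfolding \<phi>_def by (simp add: algebra_simps)
  then have "exp (- b * t) * flux t \<le> exp (- b * t) * (- m * exp (b * (t - 1)))"
    by (intro mult_left_mono) auto
  also have "\<dots> = - m * exp (- b)" by (simp add: exp_add[symmetric] algebra_simps)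
  finally show ?thesis using V'_eq_flux by simp
qed

lemma flux_nonpos_if_below:
  assumes "0 \<le> b" and below: "\<And>t. V t < c"
  shows "flux t0 \<le> 0"
proof (rule ccontr)
  assume "\<not> flux t0 \<le> 0"
  show False
  proof (rule not_pos_backward_if_deriv_ge_pos[of t0 V V' "exp (- b * t0) * flux t0"])
    fix t assume "t \<le> t0"
    have "exp (- b * t0) * flux t0 \<le> exp (- b * t) * flux t0"
      using \<open>t \<le> t0\<close> \<open>0 \<le> b\<close> \<open>\<not> flux t0 \<le> 0\<close> by (intro mult_right_mono) (auto simp: mult_left_mono)
    also have "\<dots> \<le> exp (- b * t) * flux t"
      using flux_antimono[OF \<open>t \<le> t0\<close> below] by simp
    finally show "exp (- b * t0) * flux t0 \<le> V' t" using V'_eq_flux by simp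
  qed (use V_deriv V_pos \<open>\<not> flux t0 \<le> 0\<close> in auto)
qed

lemma nonincreasing_solution_absurd_if_p_nonpos:
  assumes "0 \<le> b" "p \<le> 0" and flux_nonpos: "\<And>t. flux t \<le> 0" and "V 0 < c"
  shows False
proof -
  define m where "m = source (V 0)"
  have "0 < m" unfolding m_def using source_pos V_pos \<open>V 0 < c\<close> by blast
  have source_ge: "m \<le> source (V r)" if "0 \<le> r" for r
  proof -
    have "V r \<le> V 0" using V_antimono[OF flux_nonpos that] .
    then have "V 0 powr p \<le> V r powr p" "c powr (p - 1) * V r \<le> c powr (p - 1) * V 0"
      using powr_mono2'[OF \<open>p \<le> 0\<close> V_pos] by (auto intro: mult_left_mono)
    then show ?thesis unfolding m_def source_def by linarith
  qed
  show False
  proof (rule not_pos_forever_if_deriv_le_neg[of 1 V V' "m * exp (- b)"])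
    fix t :: real assume "1 \<le> t"
    then show "V' t \<le> - (m * exp (- b))"
      using V'_le_of_source_bound[OF \<open>0 \<le> b\<close> flux_nonpos] source_ge \<open>0 < m\<close> by simp
  qed (use V_deriv V_pos \<open>0 < m\<close> in auto)
qed

lemma nonincreasing_solution_absurd_if_p_pos:
  assumes "0 \<le> b" "0 < p" and flux_nonpos: "\<And>t. flux t \<le> 0" and "V 0 < c"
  shows False
proof -
  define \<epsilon> where "\<epsilon> = 1 - c powr (p - 1) * V 0 powr (1 - p)"
  have "V 0 powr (1 - p) < c powr (1 - p)"
    using V_pos[of 0] \<open>V 0 < c\<close> p_less_1 by (simp add: powr_less_mono2)
  moreover have "c powr (p - 1) * c powr (1 - p) = 1"
    using c_pos by (simp add: powr_add[symmetric])
  ultimately have "0 < \<epsilon>" unfolding \<epsilon>_def using c_pos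
    by (metis diff_gt_0_iff_gt mult_strict_left_mono powr_gt_zero order_less_irrefl)
  have source_ge: "\<epsilon> * V r powr p \<le> source (V r)" if "0 \<le> r" for r
  proof -
    have "V r powr (1 - p) \<le> V 0 powr (1 - p)"
      using V_antimono[OF flux_nonpos that] V_pos[of r] p_less_1 by (intro powr_mono2) auto
    then have "\<epsilon> * V r powr p \<le> (1 - c powr (p - 1) * V r powr (1 - p)) * V r powr p"
      unfolding \<epsilon>_def by (intro mult_right_mono) (auto intro: mult_left_mono)
    also have "\<dots> = source (V r)"
      using V_pos[of r] by (simp add: source_def algebra_simps powr_add[symmetric])
    finally show ?thesis .
  qed
  \<comment> \<open>Since source V \<ge> \<epsilon> V^p, the function V^(1-p) decreases at a uniform rate.\<close>
  define C where "C = (1 - p) * \<epsilon> * exp (- b)"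
  show False
  proof (rule not_pos_forever_if_deriv_le_neg[of 1 "\<lambda>t. V t powr (1 - p)"
        "\<lambda>t. (1 - p) * V t powr (- p) * V' t" C])
    fix t :: real assume "1 \<le> t"
    show "((\<lambda>t. V t powr (1 - p)) has_real_derivative (1 - p) * V t powr (- p) * V' t) (at t)"
      using DERIV_fun_powr[OF V_deriv V_pos, of "1 - p"] by simp
    have "V' t \<le> - (\<epsilon> * V t powr p) * exp (- b)"
    proof (rule V'_le_of_source_bound[OF \<open>0 \<le> b\<close> flux_nonpos])
      fix r assume r: "t - 1 \<le> r" "r \<le> t"
      have "\<epsilon> * V t powr p \<le> \<epsilon> * V r powr p"
        using V_antimono[OF flux_nonpos r(2)] V_pos[of t] \<open>0 < \<epsilon>\<close> \<open>0 < p\<close>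
        by (intro mult_left_mono powr_mono2) auto
      also have "\<dots> \<le> source (V r)" using source_ge r \<open>1 \<le> t\<close> by simp
      finally show "\<epsilon> * V t powr p \<le> source (V r)" .
    qed (use \<open>0 < \<epsilon>\<close> in simp)
    then have "(1 - p) * V t powr (- p) * V' t
        \<le> (1 - p) * V t powr (- p) * (- (\<epsilon> * V t powr p) * exp (- b))"
      using p_less_1 by (intro mult_left_mono) auto
    also have "\<dots> = - C * (V t powr (- p) * V t powr p)" unfolding C_def by (simp add: algebra_simps)
    also have "\<dots> = - C" using V_pos[of t] by (simp add: powr_add[symmetric])
    finally show "(1 - p) * V t powr (- p) * V' t \<le> - C" .
  qed (use V_pos \<open>0 < \<epsilon>\<close> p_less_1 in \<open>auto simp: C_def dest: less_imp_neq[symmetric]\<close>)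
qed

lemma not_below_if_damping_nonneg:
  assumes "0 \<le> b"
  shows "\<not> (\<forall>t. V t < c)"
proof
  assume below: "\<forall>t. V t < c"
  then have "flux t \<le> 0" for t using flux_nonpos_if_below[OF \<open>0 \<le> b\<close>] by blast
  then show False
    using nonincreasing_solution_absurd_if_p_nonpos nonincreasing_solution_absurd_if_p_pos
      \<open>0 \<le> b\<close> below by (cases "p \<le> 0") auto
qed

lemma time_reversal: "fowler_autonomous_ode (\<lambda>t. V (- t)) (\<lambda>t. - V' (- t)) (- b) p c"
proof
  fix t
  show "((\<lambda>t. V (- t)) has_real_derivative - V' (- t)) (at t)"
    using DERIV_chain2[OF V_deriv[of "- t"] DERIV_minus[OF DERIV_ident]] by simp
  have "((\<lambda>t. flux (- t)) has_real_derivative exp (b * - t) * source (V (- t))) (at t)"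
    using DERIV_chain2[OF flux_has_deriv[of "- t"] DERIV_minus[OF DERIV_ident]] by simp
  then show "((\<lambda>t. exp (- b * t) * - V' (- t)) has_real_derivative
      - (exp (- b * t) * (V (- t) powr p - c powr (p - 1) * V (- t)))) (at t)"
    using DERIV_minus by (fastforce simp: flux_def source_def)
qed (use V_pos c_pos p_less_1 in auto)

lemma not_below: "\<not> (\<forall>t. V t < c)"
proof (cases "0 \<le> b")
  case True
  then show ?thesis using not_below_if_damping_nonneg by blast
next
  case False
  then show ?thesis using fowler_autonomous_ode.not_below_if_damping_nonneg[OF time_reversal] by auto
qed

lemma below_if_below_at_bot:
  assumes "\<forall>\<^sub>F t in at_bot. V t < c" and lim: "(V \<longlongrightarrow> c) at_bot"
  shows "V s < c"
proof (rule ccontr)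
  assume "\<not> V s < c"
  define S where "S = {t. c \<le> V t}"
  obtain t1 where t1: "\<And>t. t \<le> t1 \<Longrightarrow> V t < c"
    using assms(1) unfolding eventually_at_bot_linorder by blast
  have bdd: "bdd_below S" unfolding S_def bdd_below_def
    by (metis linorder_not_less mem_Collect_eq nle_le t1)
  have "continuous_on UNIV V"
    using V_deriv by (meson DERIV_continuous continuous_at_imp_continuous_on)
  then have "closed S" unfolding S_def by (intro closed_Collect_le continuous_intros)
  define ts where "ts = Inf S"
  have "s \<in> S" using \<open>\<not> V s < c\<close> unfolding S_def by simp
  then have "ts \<in> S" unfolding ts_def using closed_contains_Inf[OF _ bdd \<open>closed S\<close>] by blast
  then have "c \<le> V ts" unfolding S_def by simp
  have below: "V t < c" if "t < ts" for t
    using cInf_lower[OF _ bdd, of t] that unfolding ts_def S_def by force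
  have flux_nonneg: "0 \<le> flux t0" if "t0 < ts" for t0
  proof (rule ccontr)
    assume "\<not> 0 \<le> flux t0"
    obtain z where z: "t0 < z" "z < ts" "V ts - V t0 = (ts - t0) * V' z"
      using MVT2[OF \<open>t0 < ts\<close>, of V V'] V_deriv by blast
    have "flux z < 0" using flux_antimono[of t0 z] below z \<open>\<not> 0 \<le> flux t0\<close> by force
    then have "(ts - t0) * V' z < 0" using z V'_eq_flux[of z] by (simp add: mult_pos_neg)
    then show False using z below[OF \<open>t0 < ts\<close>] \<open>c \<le> V ts\<close> by simp
  qed
  have V_mono: "V t \<le> V (ts - 1)" if "t \<le> ts - 1" for t
    using DERIV_nonneg_imp_nondecreasing[OF that, of V] V_deriv flux_nonneg V'_eq_flux by force
  have "c \<le> V (ts - 1)"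
    using tendsto_upperbound[OF lim] V_mono unfolding eventually_at_bot_linorder by force
  with below[of "ts - 1"] show False by simp
qed

lemma not_below_at_bot_and_tendsto:
  assumes "\<forall>\<^sub>F t in at_bot. V t < c"
  shows "\<not> (V \<longlongrightarrow> c) at_bot"
  using below_if_below_at_bot[OF assms] not_below by blast

end

lemma fowler_autonomous_ode_of_solution:
  fixes u :: "real \<Rightarrow> real"
  assumes sol: "pos_solution_on \<sigma> p {0<..} u"
    and exponents: "a * (1 - p) = \<sigma> + 2" and "0 < c" "p < 1"
    and equilibrium: "c powr (p - 1) = a * (1 - a)"
  shows "\<exists>V'. fowler_autonomous_ode (\<lambda>t. exp (- a * t) * u (exp t)) V' (2 * a - 1) p c"
proof -
  obtain u' u'' where "is_C2_on {0<..} u u' u''"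
    and eqs: "\<forall>x\<in>{0<..}. u x > 0 \<and> u'' x + x powr \<sigma> * (u x) powr p = 0"
    using sol unfolding pos_solution_on_def by blast
  then have du: "((\<lambda>t. u (exp t)) has_real_derivative u' (exp t) * exp t) (at t)"
    and du': "((\<lambda>t. u' (exp t)) has_real_derivative u'' (exp t) * exp t) (at t)" for t
    unfolding is_C2_on_def by (auto intro!: DERIV_chain2[where g=exp] DERIV_exp)
  define V' where "V' t = exp (- a * t) * (exp t * u' (exp t) - a * u (exp t))" for t
  show ?thesis
  proof (intro exI[of _ V'] fowler_autonomous_ode.intro)
    fix t :: real
    define x where "x = exp t"
    have "x > 0" unfolding x_def by simp
    show "((\<lambda>t. exp (- a * t) * u (exp t)) has_real_derivative V' t) (at t)"
      unfolding V'_def using du by (auto intro!: derivative_eq_intros simp: algebra_simps)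
    have flux: "exp ((2 * a - 1) * t) * V' t = exp ((a - 1) * t) * (exp t * u' (exp t) - a * u (exp t))"
      for t unfolding V'_def by (simp add: mult.assoc[symmetric] exp_add[symmetric] left_diff_distrib)
    have "((\<lambda>t. exp ((a - 1) * t) * (exp t * u' (exp t) - a * u (exp t))) has_real_derivative
        exp ((a - 1) * t) * (x * x * u'' x) + a * (1 - a) * (exp ((a - 1) * t) * u x)) (at t)"
      unfolding x_def using du du' by (auto intro!: derivative_eq_intros simp: algebra_simps)
    also have "x * x * u'' x = - (exp ((2 + \<sigma>) * t) * u x powr p)"
    proof -
      have "x * x * x powr \<sigma> = exp ((2 + \<sigma>) * t)"
        unfolding x_def by (simp add: exp_powr_real exp_add[symmetric] algebra_simps)
      moreover have "u'' x = - (x powr \<sigma> * u x powr p)"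
        using eqs \<open>x > 0\<close> by (simp add: eq_neg_iff_add_eq_0)
      ultimately show ?thesis by (metis mult.assoc mult_minus_right)
    qed
    also have "exp ((a - 1) * t) * - (exp ((2 + \<sigma>) * t) * u x powr p)
        = - (exp ((2 * a - 1) * t) * (exp (- a * t) * u x) powr p)"
    proof -
      have "(a - 1) * t + (2 + \<sigma>) * t = (2 * a - 1) * t + - a * t * p" using exponents by algebra
      then show ?thesis using eqs \<open>x > 0\<close>
        by (simp add: powr_mult exp_powr_real exp_add[symmetric] algebra_simps)
    qed
    also have "exp ((a - 1) * t) * u x = exp ((2 * a - 1) * t) * (exp (- a * t) * u x)"
      by (simp add: exp_add[symmetric] algebra_simps)
    finally show "((\<lambda>t. exp ((2 * a - 1) * t) * V' t) has_real_derivative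
        - (exp ((2 * a - 1) * t) * ((exp (- a * t) * u (exp t)) powr p
           - c powr (p - 1) * (exp (- a * t) * u (exp t))))) (at t)"
      unfolding flux x_def equilibrium by (simp add: algebra_simps)
    show "0 < exp (- a * t) * u (exp t)" using eqs by simp
  qed (use assms in auto)
qed

lemma singular_solution_parameters:
  fixes \<sigma> p a c :: real
  assumes "\<sigma> > -2" "p < -1 - \<sigma>" "a = (\<sigma> + 2) / (1 - p)"
    and "c = (a * (1 - a)) powr (1 / (p - 1))"
  shows "a * (1 - p) = \<sigma> + 2" "0 < c" "p < 1" "c powr (p - 1) = a * (1 - a)"
proof -
  show "p < 1" using assms by simp
  then show "a * (1 - p) = \<sigma> + 2" using assms by simp
  have "0 < a" "a < 1" using assms \<open>p < 1\<close> by (simp_all add: divide_less_eq)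
  then show "0 < c" "c powr (p - 1) = a * (1 - a)"
    using assms \<open>p < 1\<close> by (simp_all add: powr_powr)
qed

lemma no_solution_below_singular_solution:
  assumes "a * (1 - p) = \<sigma> + 2" "0 < c" "p < 1" "c powr (p - 1) = a * (1 - a)"
    and "pos_solution_on \<sigma> p {0<..} u"
  shows "\<not> (\<forall>x>0. u x < c * x powr a)"
proof
  assume below: "\<forall>x>0. u x < c * x powr a"
  obtain V' where "fowler_autonomous_ode (\<lambda>t. exp (- a * t) * u (exp t)) V' (2 * a - 1) p c"
    using fowler_autonomous_ode_of_solution assms by blast
  moreover have "exp (- a * t) * u (exp t) < c" for t
  proof -
    have "exp (- a * t) * u (exp t) < exp (- a * t) * (c * exp t powr a)" using below by simp
    also have "\<dots> = c" by (simp add: exp_powr_real exp_add[symmetric])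
    finally show ?thesis .
  qed
  ultimately show False using fowler_autonomous_ode.not_below by blast
qed

lemma tendsto_zero_and_eventually_neg_of_ratio:
  fixes w :: "real \<Rightarrow> real"
  assumes ratio: "((\<lambda>x. w x / x powr \<mu>) \<longlongrightarrow> \<alpha>) (at_right 0)" and "\<alpha> < 0" "0 < \<mu>"
  shows "(w \<longlongrightarrow> 0) (at_right 0)" "\<forall>\<^sub>F x in at_right 0. w x < 0"
proof -
  have pos: "\<forall>\<^sub>F x in at_right 0. 0 < x powr \<mu>"
    unfolding eventually_at_right_field by (rule exI[of _ 1]) auto
  have "((\<lambda>x. x powr \<mu>) \<longlongrightarrow> 0) (at_right 0)"
    by (rule tendsto_zero_powrI[of "\<lambda>x. x" _ "\<lambda>x. \<mu>" \<mu>])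
      (use \<open>0 < \<mu>\<close> in \<open>auto intro!: tendsto_ident_at simp: eventually_at_right_field\<close>)
  from tendsto_mult[OF ratio this] have "((\<lambda>x. w x / x powr \<mu> * x powr \<mu>) \<longlongrightarrow> 0) (at_right 0)"
    by simp
  moreover have "\<forall>\<^sub>F x in at_right 0. w x / x powr \<mu> * x powr \<mu> = w x"
    using pos by eventually_elim simp
  ultimately show "(w \<longlongrightarrow> 0) (at_right 0)" by (rule Lim_transform_eventually)
  show "\<forall>\<^sub>F x in at_right 0. w x < 0"
    using order_tendstoD(2)[OF ratio \<open>\<alpha> < 0\<close>] pos
    by eventually_elim (simp add: divide_less_0_iff)
qed

lemma no_global_solution_of_negative_perturbation:
  fixes w :: "real \<Rightarrow> real"
  assumes "a * (1 - p) = \<sigma> + 2" "0 < c" "p < 1" "c powr (p - 1) = a * (1 - a)"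
    and ratio: "((\<lambda>x. w x / x powr \<mu>) \<longlongrightarrow> \<alpha>) (at_right 0)" and "\<alpha> < 0" "0 < \<mu>" "0 < T"
    and "pos_solution_on \<sigma> p {0<..} u"
  shows "\<not> (\<forall>x\<in>{0<..<T}. u x = c * x powr a * (1 + w x))"
proof
  assume u_eq: "\<forall>x\<in>{0<..<T}. u x = c * x powr a * (1 + w x)"
  define V where "V t = exp (- a * t) * u (exp t)" for t
  obtain V' where ode: "fowler_autonomous_ode V V' (2 * a - 1) p c"
    unfolding V_def[abs_def] using fowler_autonomous_ode_of_solution assms by blast
  have "\<forall>\<^sub>F t in at_bot. exp t < T"
    using order_tendstoD(2)[OF exp_at_bot \<open>0 < T\<close>] .
  then have V_eq: "\<forall>\<^sub>F t in at_bot. V t = c * (1 + w (exp t))"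
    by eventually_elim (simp add: V_def u_eq exp_powr_real exp_add[symmetric])
  have exp_at_right: "filterlim (exp :: real \<Rightarrow> real) (at_right 0) at_bot"
    using tendsto_imp_filterlim_at_right[OF exp_at_bot] by simp
  note w_props = tendsto_zero_and_eventually_neg_of_ratio[OF ratio \<open>\<alpha> < 0\<close> \<open>0 < \<mu>\<close>]
  have "\<forall>\<^sub>F t in at_bot. V t < c"
    using V_eq eventually_compose_filterlim[OF w_props(2) exp_at_right]
    by eventually_elim (use \<open>0 < c\<close> in simp)
  moreover have "(V \<longlongrightarrow> c) at_bot"
  proof -
    have "((\<lambda>t. c * (1 + w (exp t))) \<longlongrightarrow> c * (1 + 0)) at_bot"
      by (intro tendsto_intros filterlim_compose[OF w_props(1) exp_at_right])
    then show ?thesis using V_eq by (simp add: tendsto_cong)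
  qed
  ultimately show False using fowler_autonomous_ode.not_below_at_bot_and_tendsto[OF ode] by blast
qed

theorem theorem5p11:
  fixes \<sigma> p a c\<^sub>a :: real
  assumes h\<sigma>: "\<sigma> > -2" and hp: "p < -1 - \<sigma>"
    and ha: "a = (\<sigma> + 2) / (1 - p)"
    and hc: "c\<^sub>a = (a * (1 - a)) powr (1 / (p - 1))"
  shows "\<not> (\<exists>u. pos_solution_on \<sigma> p {0<..} u \<and> (\<forall>x>0. u x < c\<^sub>a * x powr a))
    \<and> (\<forall>\<alpha> \<mu> T w w' w''. \<alpha> < 0 \<longrightarrow> \<mu> > 0 \<longrightarrow>
          \<mu>\<^sup>2 + (2 * a - 1) * \<mu> + a * (1 - a) * (p - 1) = 0 \<longrightarrow> T > 0 \<longrightarrow>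
          continuous_on {0..T} w \<longrightarrow> is_C2_on {0<..<T} w w' w'' \<longrightarrow>
          (\<forall>x\<in>{0<..<T}. x * (x * w'' x + w' x) + (2 * a - 1) * x * w' x
               + a * (1 - a) * (p - 1) * w x
               + a * (1 - a) * ((1 + w x) powr p - 1 - p * w x) = 0) \<longrightarrow>
          ((\<lambda>x. w x / x powr \<mu>) \<longlongrightarrow> \<alpha>) (at_right 0) \<longrightarrow>
          \<not> (\<exists>u. pos_solution_on \<sigma> p {0<..} u \<and>
                 (\<forall>x\<in>{0<..<T}. u x = c\<^sub>a * x powr a * (1 + w x))))"
proof (intro conjI allI impI)
  note params = singular_solution_parameters[OF h\<sigma> hp ha hc]
  show "\<not> (\<exists>u. pos_solution_on \<sigma> p {0<..} u \<and> (\<forall>x>0. u x < c\<^sub>a * x powr a))"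
    using no_solution_below_singular_solution[OF params] by blast
  fix \<alpha> \<mu> T :: real and w w' w'' :: "real \<Rightarrow> real"
  assume "\<alpha> < 0" "\<mu> > 0" "T > 0" and ratio: "((\<lambda>x. w x / x powr \<mu>) \<longlongrightarrow> \<alpha>) (at_right 0)"
  show "\<not> (\<exists>u. pos_solution_on \<sigma> p {0<..} u \<and>
      (\<forall>x\<in>{0<..<T}. u x = c\<^sub>a * x powr a * (1 + w x)))"
    using no_global_solution_of_negative_perturbation[OF params ratio \<open>\<alpha> < 0\<close> \<open>\<mu> > 0\<close> \<open>T > 0\<close>]
    by blast
qed

end
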